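(* Let $n\ge2$ and let $Z_1=\{z_{j,1}\}_{j=1}^n$ and $Z_2=\{z_{j,2}\}_{j=1}^{n-1}$ be subsets of the unit circle, $z_{j,l}=e^{ix_{j,l}}$, with exactly one common point, arranged as $$x_{1,1}<x_{1,2}<x_{2,1}<x_{2,2}<\dots<x_{n-1,1}<x_{n-1,2}=x_{n,1}<x_{1,1}+2\pi.$$ For $l=1,2$ let $\mathcal{C}_1^{(l)}=\mathcal{C}(\alpha_0^{(l)},\dots,\alpha_{n-2}^{(l)};\beta_1^{(l)})$ (order $n$) and $\mathcal{C}_2^{(l)}=\mathcal{C}(\alpha_0^{(l)},\dots,\alpha_{n-3}^{(l)};\beta_2^{(l)})$ (order $n-1$) be finite CMV matrices such that the set of eigenvalues of $\mathcal{C}_1^{(l)}$ is $Z_1$ and the set of eigenvalues of $\mathcal{C}_2^{(l)}$ is $Z_2$. If $\alpha_{n-2}^{(1)}=\alpha_{n-2}^{(2)}$, then $\mathcal{C}_1^{(1)}=\mathcal{C}_1^{(2)}$ and $\mathcal{C}_2^{(1)}=\mathcal{C}_2^{(2)}$.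
   Context: For $\alpha\in\mathbb{C}$ with $|\alpha|\le 1$ put $\rho=\sqrt{1-|\alpha|^2}$ and $\Theta(\alpha)=\begin{pmatrix}\bar\alpha&\rho\\ \rho&-\alpha\end{pmatrix}$. Given $N\ge1$, $\alpha_0,\dots,\alpha_{N-2}$ with $|\alpha_j|<1$ and $\beta$ with $|\beta|=1$, the finite CMV matrix $\mathcal{C}(\alpha_0,\dots,\alpha_{N-2};\beta)$ of order $N$ is the $N\times N$ matrix $\mathcal{L}\mathcal{M}$, where: if $N=2k+1$, $\mathcal{L}=\Theta(\alpha_0)\oplus\Theta(\alpha_2)\oplus\cdots\oplus\Theta(\alpha_{2k-2})\oplus\bar\beta$ and $\mathcal{M}=1\oplus\Theta(\alpha_1)\oplus\cdots\oplus\Theta(\alpha_{2k-1})$; if $N=2k$, $\mathcal{L}=\Theta(\alpha_0)\oplus\Theta(\alpha_2)\oplus\cdots\oplus\Theta(\alpha_{2k-2})$ and $\mathcal{M}=1\oplus\Theta(\alpha_1)\oplus\cdots\oplus\Theta(\alpha_{2k-3})\oplus\bar\beta$ ($1$ and $\bar\beta$ are $1\times1$ blocks; for $N=1$ the matrix is $(\bar\beta)$). *)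

theory Defs
  imports Complex_Main "Jordan_Normal_Form.Char_Poly"
begin

definition cmv_rho :: "complex \<Rightarrow> complex" where
  "cmv_rho a = complex_of_real (sqrt (1 - (cmod a)^2))"

text \<open>Entry (i,j), i,j in {0,1}, of Theta(a) = [[cnj a, rho], [rho, -a]]\<close>
definition theta_entry :: "complex \<Rightarrow> nat \<Rightarrow> nat \<Rightarrow> complex" where
  "theta_entry a i j =
     (if i = 0 \<and> j = 0 then cnj a
      else if i = 1 \<and> j = 1 then - a
      else cmv_rho a)"

text \<open>L = Theta(alpha_0) (+) Theta(alpha_2) (+) ... , padded with cnj beta in the last
  diagonal entry when N is odd.  The list al = [alpha_0, ..., alpha_{N-2}].\<close>
definition cmv_L :: "nat \<Rightarrow> complex list \<Rightarrow> complex \<Rightarrow> complex mat" where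
  "cmv_L N al b = mat N N (\<lambda>(i,j).
     if i div 2 = j div 2 \<and> 2 * (i div 2) + 1 < N
       then theta_entry (al ! (2 * (i div 2))) (i mod 2) (j mod 2)
     else if i = j then cnj b else 0)"

text \<open>M = 1 (+) Theta(alpha_1) (+) Theta(alpha_3) (+) ... , padded with cnj beta in the last
  diagonal entry when N is even.\<close>
definition cmv_M :: "nat \<Rightarrow> complex list \<Rightarrow> complex \<Rightarrow> complex mat" where
  "cmv_M N al b = mat N N (\<lambda>(i,j).
     if i = 0 \<and> j = 0 then 1
     else if 1 \<le> i \<and> 1 \<le> j \<and> (i - 1) div 2 = (j - 1) div 2 \<and> 2 * ((i - 1) div 2) + 2 < N
       then theta_entry (al ! (2 * ((i - 1) div 2) + 1)) ((i - 1) mod 2) ((j - 1) mod 2)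
     else if i = j then cnj b else 0)"

definition CMV :: "complex list \<Rightarrow> complex \<Rightarrow> complex mat" where
  "CMV al b = cmv_L (length al + 1) al b * cmv_M (length al + 1) al b"

end

theory Submission
  imports Defs
begin

text \<open>
  The characteristic polynomial of \<open>\<C>(\<alpha>\<^sub>0, \<dots>, \<alpha>\<^sub>N\<^sub>-\<^sub>2; \<beta>)\<close> is the paraorthogonal
  polynomial \<open>z \<Phi>\<^sub>N\<^sub>-\<^sub>1(z) - \<beta>\<^sup>* \<Phi>\<^sup>*\<^sub>N\<^sub>-\<^sub>1(z)\<close> produced by the Szego recursion: since \<open>L\<close> is
  unitary, \<open>z - LM = L (z L\<^sup>* - M)\<close>, and \<open>z L\<^sup>* - M\<close> is tridiagonal, so its determinant obeys a
  three-term recurrence which is the Szego recursion up to sign.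

  The sets \<open>Z\<^sub>1\<close> and \<open>Z\<^sub>2\<close> consist of \<open>n\<close> and \<open>n - 1\<close> distinct points, so the spectra
  determine the characteristic polynomials of all four matrices. Their constant terms give the
  \<open>\<beta>\<close>'s; knowing \<open>\<alpha>\<^sub>n\<^sub>-\<^sub>2\<close>, the two polynomials then determine \<open>(\<Phi>\<^sub>n\<^sub>-\<^sub>2, \<Phi>\<^sup>*\<^sub>n\<^sub>-\<^sub>2)\<close>, and
  the Szego recursion can be run backwards because all \<open>|\<alpha>\<^sub>j| < 1\<close>.
\<close>

section \<open>Szego recursion\<close>

text \<open>\<open>szego [\<alpha>\<^sub>0, \<dots>, \<alpha>\<^sub>k\<^sub>-\<^sub>1] = (\<Phi>\<^sub>k, \<Phi>\<^sup>*\<^sub>k)\<close>, the monic orthogonal polynomial of degree \<open>k\<close>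
  and its reversal.\<close>
definition szego_step :: "complex poly \<times> complex poly \<Rightarrow> complex \<Rightarrow> complex poly \<times> complex poly" where
  "szego_step \<Phi> a = ([:0,1:] * fst \<Phi> - [:cnj a:] * snd \<Phi>, snd \<Phi> - [:a:] * ([:0,1:] * fst \<Phi>))"

definition szego :: "complex list \<Rightarrow> complex poly \<times> complex poly" where
  "szego al = foldl szego_step (1, 1) al"

lemma szego_Nil [simp]: "szego [] = (1, 1)"
  by (simp add: szego_def)

lemma szego_snoc [simp]: "szego (al @ [a]) = szego_step (szego al) a"
  by (simp add: szego_def)

lemma szego_map_upt_Suc: "szego (map c [0..<Suc k]) = szego_step (szego (map c [0..<k])) (c k)"
  by simp

lemma szego_degree_coeff:
  "degree (fst (szego al)) \<le> length al \<and> coeff (fst (szego al)) (length al) = 1 \<and>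
   degree (snd (szego al)) \<le> length al \<and> poly (snd (szego al)) 0 = 1"
proof (induction al rule: rev_induct)
  case Nil
  then show ?case by simp
next
  case (snoc a al)
  obtain p q where pq: "szego al = (p, q)" by fastforce
  with snoc have p: "degree p \<le> length al" "coeff p (length al) = 1"
    and q: "degree q \<le> length al" "poly q 0 = 1" by auto
  have "degree (pCons 0 p) \<le> Suc (length al)"
    using p(1) by (metis degree_pCons_le le_SucI not_less_eq_eq order_trans)
  moreover have "degree (Polynomial.smult c q) \<le> Suc (length al)" for c
    using q(1) degree_smult_le le_SucI order_trans by meson
  moreover have "degree (Polynomial.smult c (pCons 0 p)) \<le> Suc (length al)" for c
    by (meson calculation(1) degree_smult_le order_trans)
  moreover have "coeff q (Suc (length al)) = 0"
    using q(1) by (simp add: coeff_eq_0)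
  ultimately show ?case
    using pq p(2) q by (auto simp: szego_step_def intro: degree_diff_le order_trans[OF _ le_SucI])
qed

lemma poly_szego_snoc_0: "poly (fst (szego (al @ [a]))) 0 = - cnj a"
  using szego_degree_coeff[of al] by (simp add: szego_step_def)

lemma szego_snoc_unimodular:
  assumes "cmod b = 1"
  shows "snd (szego (al @ [b])) = Polynomial.smult (- b) (fst (szego (al @ [b])))"
proof -
  have "b * cnj b = 1"
    using assms by (metis complex_norm_square of_real_1 power_one)
  then show ?thesis
    by (simp add: szego_step_def smult_diff_right algebra_simps)
qed

lemma cnj_mult_self_neq_1:
  assumes "cmod a < 1"
  shows "cnj a * a \<noteq> 1"
proof -
  have "cnj a * a = of_real ((cmod a)\<^sup>2)"
    using complex_norm_square[of a] by (simp add: mult.commute)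
  moreover have "(cmod a)\<^sup>2 < 1"
    using assms by (simp add: power_less_one_iff)
  ultimately show ?thesis
    by (metis less_irrefl of_real_1 of_real_eq_iff)
qed

lemma szego_step_inj:
  assumes "cmod a < 1" and "szego_step (p, q) a = szego_step (p', q') a"
  shows "p = p' \<and> q = q'"
proof -
  define X A Ac :: "complex poly" where "X = [:0, 1:]" and "A = [:a:]" and "Ac = [:cnj a:]"
  define u v where "u = p - p'" and "v = q - q'"
  have "X * p - Ac * q = X * p' - Ac * q'" and "q - A * (X * p) = q' - A * (X * p')"
    using assms(2) by (simp_all add: szego_step_def X_def A_def Ac_def)
  then have "X * u = Ac * v" and v: "v = A * (X * u)"
    by (simp_all add: u_def v_def algebra_simps)
  then have "(1 - Ac * A) * (X * u) = 0"
    by (simp add: algebra_simps)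
  moreover have "1 - Ac * A \<noteq> 0" and "X \<noteq> 0"
    using cnj_mult_self_neq_1[OF assms(1)] by (auto simp: A_def Ac_def X_def one_pCons mult.commute)
  ultimately have "u = 0"
    by simp
  with v have "v = 0"
    by simp
  with \<open>u = 0\<close> show ?thesis
    by (simp add: u_def v_def)
qed

lemma szego_inj:
  assumes "length al = length bl" and "\<forall>a\<in>set al. cmod a < 1" and "szego al = szego bl"
  shows "al = bl"
  using assms
proof (induction al arbitrary: bl rule: rev_induct)
  case Nil
  then show ?case by simp
next
  case (snoc a al)
  then obtain bl' b where bl: "bl = bl' @ [b]"
    by (metis length_0_conv rev_exhaust snoc_eq_iff_butlast)
  have "a = b"
    using poly_szego_snoc_0[of al a] poly_szego_snoc_0[of bl' b] snoc.prems bl by simp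
  then have "szego al = szego bl'"
    using szego_step_inj[of a "fst (szego al)" "snd (szego al)" "fst (szego bl')" "snd (szego bl')"]
      snoc.prems bl by (simp add: prod_eq_iff)
  then show ?case
    using snoc.IH[of bl'] snoc.prems bl \<open>a = b\<close> by simp
qed

text \<open>The lower level gives \<open>z u = \<beta>\<^sub>2\<^sup>* v\<close> for the differences \<open>u, v\<close> of the two pairs
  \<open>(\<Phi>, \<Phi>\<^sup>*)\<close>; substituting into the upper level yields \<open>z u F = 0\<close> with
  \<open>F(0) = \<beta>\<^sub>1\<^sup>* (\<alpha> \<beta>\<^sub>2\<^sup>* - 1) \<noteq> 0\<close>.\<close>

lemma szego_two_levels_unique:
  assumes len: "length al = length bl" and al: "\<forall>x\<in>set al. cmod x < 1" and a: "cmod a < 1"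
    and b1: "b1 \<noteq> 0" and b2: "cmod b2 = 1"
    and level1: "fst (szego (al @ [a, b1])) = fst (szego (bl @ [a, b1']))"
    and level2: "fst (szego (al @ [b2])) = fst (szego (bl @ [b2']))"
  shows "al = bl \<and> b1 = b1' \<and> b2 = b2'"
proof -
  have "b1 = b1'" and "b2 = b2'"
    using poly_szego_snoc_0[of "al @ [a]" b1] poly_szego_snoc_0[of "bl @ [a]" b1']
      poly_szego_snoc_0[of al b2] poly_szego_snoc_0[of bl b2'] level1 level2
    by simp_all
  obtain p q p' q' where pq: "szego al = (p, q)" and pq': "szego bl = (p', q')"
    by fastforce
  define X A Ac B1c B2c :: "complex poly"
    where "X = [:0, 1:]" and "A = [:a:]" and "Ac = [:cnj a:]" and "B1c = [:cnj b1:]" and "B2c = [:cnj b2:]"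
  define u v where "u = p - p'" and "v = q - q'"
  have "X * p - B2c * q = X * p' - B2c * q'"
    using level2 pq pq' \<open>b2 = b2'\<close> by (simp add: szego_step_def X_def B2c_def)
  then have E2: "X * u = B2c * v"
    by (simp add: u_def v_def algebra_simps)
  have "X * (X * p - Ac * q) - B1c * (q - A * (X * p)) = X * (X * p' - Ac * q') - B1c * (q' - A * (X * p'))"
    using level1 pq pq' \<open>b1 = b1'\<close> szego_snoc[of "al @ [a]"] szego_snoc[of "bl @ [a]"]
    by (simp add: szego_step_def X_def A_def Ac_def B1c_def)
  then have E1: "X * (X * u - Ac * v) - B1c * (v - A * (X * u)) = 0"
    by (simp add: u_def v_def algebra_simps)
  define F where "F = B2c * X - Ac * X - B1c + B1c * A * B2c"
  have "(X * u) * F = B2c * (X * (X * u - Ac * v) - B1c * (v - A * (X * u)))"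
    unfolding F_def E2 by (simp add: algebra_simps)
  with E1 have "(X * u) * F = 0"
    by simp
  moreover have "F \<noteq> 0"
  proof
    assume "F = 0"
    moreover have "poly F 0 = cnj b1 * (a * cnj b2 - 1)"
      by (simp add: F_def X_def A_def Ac_def B1c_def B2c_def algebra_simps)
    moreover have "a * cnj b2 \<noteq> 1"
      using a b2 by (metis norm_mult complex_mod_cnj mult.right_neutral norm_one less_irrefl)
    ultimately show False
      using b1 by simp
  qed
  moreover have "X \<noteq> 0" and "B2c \<noteq> 0"
    using b2 by (auto simp: X_def B2c_def)
  ultimately have "u = 0" and "v = 0"
    using E2 by auto
  then have "szego al = szego bl"
    using pq pq' by (simp add: u_def v_def)
  then show ?thesis
    using szego_inj[OF len al] \<open>b1 = b1'\<close> \<open>b2 = b2'\<close> by simp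
qed

section \<open>Symmetric tridiagonal determinants\<close>

definition tridiag :: "nat \<Rightarrow> (nat \<Rightarrow> 'a) \<Rightarrow> (nat \<Rightarrow> 'a) \<Rightarrow> 'a::comm_ring_1 mat" where
  "tridiag k d u = mat k k (\<lambda>(i, j).
     if i = j then d i else if j = Suc i then u i else if i = Suc j then u j else 0)"

lemma tridiag_carrier [simp]: "tridiag k d u \<in> carrier_mat k k"
  by (simp add: tridiag_def)

lemma det_tridiag_Suc_0: "det (tridiag (Suc 0) d u) = d 0"
  by (simp add: det_single tridiag_def)

lemma det_tridiag_Suc_Suc:
  "det (tridiag (Suc (Suc k)) d u) = d (Suc k) * det (tridiag (Suc k) d u) - (u k)\<^sup>2 * det (tridiag k d u)"
proof -
  let ?A = "tridiag (Suc (Suc k)) d u"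
  let ?B = "mat_delete ?A (Suc k) k"
  have A: "?A \<in> carrier_mat (Suc (Suc k)) (Suc (Suc k))"
    by simp
  have B: "?B \<in> carrier_mat (Suc k) (Suc k)"
    using mat_delete_carrier[OF A] by simp
  have "det ?A = (\<Sum>j<Suc (Suc k). ?A $$ (Suc k, j) * cofactor ?A (Suc k) j)"
    by (rule laplace_expansion_row[OF A]) simp
  also have "\<dots> = ?A $$ (Suc k, k) * cofactor ?A (Suc k) k + ?A $$ (Suc k, Suc k) * cofactor ?A (Suc k) (Suc k)"
    by (simp add: sum.neutral tridiag_def)
  finally have expand_last_row: "det ?A = u k * cofactor ?A (Suc k) k + d (Suc k) * cofactor ?A (Suc k) (Suc k)"
    by (simp add: tridiag_def)
  have "det ?B = (\<Sum>i<Suc k. ?B $$ (i, k) * cofactor ?B i k)"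
    by (rule laplace_expansion_column[OF B]) simp
  also have "\<dots> = ?B $$ (k, k) * cofactor ?B k k"
    by (simp add: sum.neutral tridiag_def mat_delete_def)
  moreover have "mat_delete ?B k k = tridiag k d u"
    by (rule eq_matI) (auto simp: mat_delete_def tridiag_def)
  ultimately have "det ?B = u k * det (tridiag k d u)"
    by (simp add: cofactor_def mat_delete_def tridiag_def)
  moreover have "mat_delete ?A (Suc k) (Suc k) = tridiag (Suc k) d u"
    by (rule eq_matI) (auto simp: mat_delete_def tridiag_def)
  ultimately show ?thesis
    using expand_last_row by (simp add: cofactor_def power2_eq_square algebra_simps)
qed

section \<open>The characteristic polynomial of a CMV matrix\<close>

lemma cmv_rho_mult_self:
  assumes "cmod a \<le> 1"
  shows "cmv_rho a * cmv_rho a = 1 - a * cnj a"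
proof -
  have "sqrt (1 - (cmod a)\<^sup>2) * sqrt (1 - (cmod a)\<^sup>2) = 1 - (cmod a)\<^sup>2"
    using assms by (simp add: abs_square_le_1)
  then have "cmv_rho a * cmv_rho a = of_real (1 - (cmod a)\<^sup>2)"
    by (metis cmv_rho_def of_real_mult)
  then show ?thesis
    using complex_norm_square[of a] by simp
qed

lemma cnj_cmv_rho [simp]: "cnj (cmv_rho a) = cmv_rho a"
  by (simp add: cmv_rho_def)

text \<open>\<open>pencil N c\<close> is \<open>z L\<^sup>* - M\<close> for \<open>c = [\<alpha>\<^sub>0, \<dots>, \<alpha>\<^sub>N\<^sub>-\<^sub>2, \<beta>]\<close> (see \<open>pencil_eq_cmv\<close>);
  the first diagonal entry follows the convention \<open>\<alpha>\<^sub>-\<^sub>1 = -1\<close>.\<close>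

definition pencil_diag :: "(nat \<Rightarrow> complex) \<Rightarrow> nat \<Rightarrow> complex poly" where
  "pencil_diag c i =
     (if i = 0 then [:-1, c 0:]
      else if even i then [:c (i - 1), c i:]
      else [:- cnj (c i), - cnj (c (i - 1)):])"

definition pencil_offdiag :: "(nat \<Rightarrow> complex) \<Rightarrow> nat \<Rightarrow> complex poly" where
  "pencil_offdiag c i = (if even i then [:0, cmv_rho (c i):] else [:- cmv_rho (c i):])"

abbreviation pencil :: "nat \<Rightarrow> (nat \<Rightarrow> complex) \<Rightarrow> complex poly mat" where
  "pencil k c \<equiv> tridiag k (pencil_diag c) (pencil_offdiag c)"

lemma det_pencil_step_even:
  assumes "even k" and "cmod (c k) \<le> 1"
    and Dk: "det (pencil k c) = s * fst (szego (map c [0..<k]))"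
    and DSk: "det (pencil (Suc k) c) = - (s * snd (szego (map c [0..<Suc k])))"
  shows "det (pencil (Suc (Suc k)) c) = - (s * fst (szego (map c [0..<Suc (Suc k)])))"
proof -
  define X A Ac Bc :: "complex poly"
    where "X = [:0, 1:]" and "A = [:c k:]" and "Ac = [:cnj (c k):]" and "Bc = [:cnj (c (Suc k)):]"
  obtain p q where pq: "szego (map c [0..<k]) = (p, q)"
    by fastforce
  define P Q where "P = X * p - Ac * q" and "Q = q - A * (X * p)"
  have sz: "szego (map c [0..<Suc k]) = (P, Q)"
    unfolding szego_map_upt_Suc pq by (simp add: szego_step_def P_def Q_def X_def A_def Ac_def)
  have "(pencil_offdiag c k)\<^sup>2 = X\<^sup>2 * (1 - Ac * A)"
    using assms(1,2) by (simp add: pencil_offdiag_def X_def A_def Ac_def power2_eq_square cmv_rho_mult_self one_pCons)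
  moreover have "pencil_diag c (Suc k) = - (Bc + Ac * X)"
    using assms(1) by (simp add: pencil_diag_def X_def Ac_def Bc_def)
  ultimately have "det (pencil (Suc (Suc k)) c) = - (Bc + Ac * X) * - (s * Q) - X\<^sup>2 * (1 - Ac * A) * (s * p)"
    using Dk DSk by (simp only: det_tridiag_Suc_Suc pq sz fst_conv snd_conv)
  also have "\<dots> = - (s * (X * P - Bc * Q))"
    by (simp add: P_def Q_def algebra_simps power2_eq_square)
  also have "X * P - Bc * Q = fst (szego (map c [0..<Suc (Suc k)]))"
    unfolding szego_map_upt_Suc[of c "Suc k"] sz by (simp add: szego_step_def X_def Bc_def)
  finally show ?thesis .
qed

lemma det_pencil_step_odd:
  assumes "odd k" and "cmod (c k) \<le> 1"
    and Dk: "det (pencil k c) = - (s * snd (szego (map c [0..<k])))"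
    and DSk: "det (pencil (Suc k) c) = - (s * fst (szego (map c [0..<Suc k])))"
  shows "det (pencil (Suc (Suc k)) c) = s * snd (szego (map c [0..<Suc (Suc k)]))"
proof -
  define X B Bc B' :: "complex poly"
    where "X = [:0, 1:]" and "B = [:c k:]" and "Bc = [:cnj (c k):]" and "B' = [:c (Suc k):]"
  obtain p q where pq: "szego (map c [0..<k]) = (p, q)"
    by fastforce
  define P Q where "P = X * p - Bc * q" and "Q = q - B * (X * p)"
  have sz: "szego (map c [0..<Suc k]) = (P, Q)"
    unfolding szego_map_upt_Suc pq by (simp add: szego_step_def P_def Q_def X_def B_def Bc_def)
  have "(pencil_offdiag c k)\<^sup>2 = 1 - Bc * B"
    using assms(1,2) by (simp add: pencil_offdiag_def B_def Bc_def power2_eq_square cmv_rho_mult_self one_pCons)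
  moreover have "pencil_diag c (Suc k) = B + B' * X"
    using assms(1) by (simp add: pencil_diag_def X_def B_def B'_def)
  ultimately have "det (pencil (Suc (Suc k)) c) = (B + B' * X) * - (s * P) - (1 - Bc * B) * - (s * q)"
    using Dk DSk by (simp only: det_tridiag_Suc_Suc pq sz fst_conv snd_conv)
  also have "\<dots> = s * (Q - B' * (X * P))"
    by (simp add: P_def Q_def algebra_simps)
  also have "Q - B' * (X * P) = snd (szego (map c [0..<Suc (Suc k)]))"
    unfolding szego_map_upt_Suc[of c "Suc k"] sz by (simp add: szego_step_def X_def B'_def)
  finally show ?thesis .
qed

lemma det_pencil:
  assumes "\<forall>j<2 * t. cmod (c j) \<le> 1"
  shows "det (pencil (2 * t) c) = (-1) ^ t * fst (szego (map c [0..<2 * t])) \<and>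
    det (pencil (Suc (2 * t)) c) = - ((-1) ^ t * snd (szego (map c [0..<Suc (2 * t)])))"
  using assms
proof (induction t)
  case 0
  then show ?case
    by (simp add: det_tridiag_Suc_0 pencil_diag_def szego_def szego_step_def one_pCons)
next
  case (Suc t)
  then have D2: "det (pencil (Suc (Suc (2 * t))) c) = - ((-1) ^ t * fst (szego (map c [0..<Suc (Suc (2 * t))])))"
    by (intro det_pencil_step_even) auto
  then have "det (pencil (Suc (Suc (Suc (2 * t)))) c) = (-1) ^ t * snd (szego (map c [0..<Suc (Suc (Suc (2 * t)))]))"
    using Suc by (intro det_pencil_step_odd) auto
  with D2 show ?case
    by simp
qed

lemma det_pencil_unimodular_last:
  assumes "0 < N" and "\<forall>j<N. cmod (c j) \<le> 1" and "cmod (c (N - 1)) = 1"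
  shows "\<exists>\<kappa>. det (pencil N c) = Polynomial.smult \<kappa> (fst (szego (map c [0..<N])))"
proof -
  have sign: "(-1) ^ t * p = Polynomial.smult ((-1) ^ t) p" for t and p :: "complex poly"
    by (simp add: minus_one_power_iff)
  obtain t where "N = 2 * t \<or> N = Suc (2 * t)"
    by (metis odd_two_times_div_two_succ dvd_mult_div_cancel Suc_eq_plus1)
  then show ?thesis
  proof
    assume N: "N = 2 * t"
    then have "det (pencil N c) = Polynomial.smult ((-1) ^ t) (fst (szego (map c [0..<N])))"
      using det_pencil[of t c] assms(2) sign by simp
    then show ?thesis ..
  next
    assume N: "N = Suc (2 * t)"
    then have "snd (szego (map c [0..<N])) = Polynomial.smult (- c (2 * t)) (fst (szego (map c [0..<N])))"
      using szego_snoc_unimodular[of "c (2 * t)" "map c [0..<2 * t]"] assms(3) by simp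
    then have "det (pencil N c) = Polynomial.smult (c (2 * t) * (-1) ^ t) (fst (szego (map c [0..<N])))"
      using det_pencil[of t c] assms(2) N sign by simp
    then show ?thesis ..
  qed
qed

lemma cmv_L_carrier: "cmv_L N al b \<in> carrier_mat N N"
  by (simp add: cmv_L_def)

lemma cmv_M_carrier: "cmv_M N al b \<in> carrier_mat N N"
  by (simp add: cmv_M_def)

lemma CMV_carrier: "CMV al b \<in> carrier_mat (length al + 1) (length al + 1)"
  unfolding CMV_def using cmv_L_carrier cmv_M_carrier by (rule mult_carrier_mat)

lemma cmv_L_entry:
  fixes al :: "complex list" and b :: complex
  assumes "N = length al + 1" and "i < N" and "j < N"
  defines "c \<equiv> \<lambda>k. (al @ [b]) ! k"
  shows "cmv_L N al b $$ (i, j) =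
    (if i = j then (if even i then cnj (c i) else - c (i - 1))
     else if j = Suc i then (if even i then cmv_rho (c i) else 0)
     else if i = Suc j then (if even j then cmv_rho (c j) else 0) else 0)"
proof -
  obtain q r where "i = 2 * q \<or> i = 2 * q + 1" and "j = 2 * r \<or> j = 2 * r + 1"
    by (metis odd_two_times_div_two_succ dvd_mult_div_cancel)
  then consider "i = 2 * q" "j = 2 * r" | "i = 2 * q" "j = 2 * r + 1"
    | "i = 2 * q + 1" "j = 2 * r" | "i = 2 * q + 1" "j = 2 * r + 1"
    by blast
  then show ?thesis
    using assms by cases (simp_all add: cmv_L_def theta_entry_def nth_append)
qed

lemma cmv_M_entry:
  fixes al :: "complex list" and b :: complex
  assumes "N = length al + 1" and "i < N" and "j < N"
  defines "c \<equiv> \<lambda>k. (al @ [b]) ! k"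
  shows "cmv_M N al b $$ (i, j) =
    (if i = j then (if i = 0 then 1 else if odd i then cnj (c i) else - c (i - 1))
     else if j = Suc i then (if odd i then cmv_rho (c i) else 0)
     else if i = Suc j then (if odd j then cmv_rho (c j) else 0) else 0)"
proof -
  have "\<exists>q. k = 0 \<or> k = 2 * q + 1 \<or> k = 2 * q + 2" for k :: nat
    by presburger
  then obtain q r where "i = 0 \<or> i = 2 * q + 1 \<or> i = 2 * q + 2" and "j = 0 \<or> j = 2 * r + 1 \<or> j = 2 * r + 2"
    by meson
  then consider "i = 0" "j = 0" | "i = 0" "j = 2 * r + 1" | "i = 0" "j = 2 * r + 2"
    | "i = 2 * q + 1" "j = 0" | "i = 2 * q + 1" "j = 2 * r + 1" | "i = 2 * q + 1" "j = 2 * r + 2"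
    | "i = 2 * q + 2" "j = 0" | "i = 2 * q + 2" "j = 2 * r + 1" | "i = 2 * q + 2" "j = 2 * r + 2"
    by blast
  then show ?thesis
    using assms by cases (simp_all add: cmv_M_def theta_entry_def nth_append)
qed

lemma sum_lessThan_two_support:
  assumes "i < N" and "\<forall>k<N. k \<noteq> i \<and> k \<noteq> Suc i \<longrightarrow> f k = 0"
  shows "(\<Sum>k<N. f k) = f i + (if Suc i < N then f (Suc i) else (0::'a::comm_monoid_add))"
proof -
  have "(\<Sum>k<N. f k) = (\<Sum>k\<in>{i..<min N (Suc (Suc i))}. f k)"
    by (rule sum.mono_neutral_right) (use assms in auto)
  also have "{i..<min N (Suc (Suc i))} = (if Suc i < N then {i, Suc i} else {i})"
    using assms(1) by auto
  finally show ?thesis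
    by simp
qed

lemma cmv_L_unitary:
  assumes N: "N = length al + 1" and al: "\<forall>a\<in>set al. cmod a < 1" and b: "cmod b = 1"
  shows "cmv_L N al b * map_mat cnj (cmv_L N al b) = 1\<^sub>m N"
proof (rule eq_matI)
  let ?L = "cmv_L N al b"
  let ?c = "\<lambda>k. (al @ [b]) ! k"
  have norm_c: "cmod (?c k) \<le> 1" if "k < N" for k
    using al b N that by (cases "k < length al") (auto simp: nth_append less_imp_le)
  have last_c: "?c (N - 1) * cnj (?c (N - 1)) = 1"
    using b N complex_norm_square[of b] by (simp add: nth_append)
  fix i j
  assume "i < dim_row (1\<^sub>m N)" and "j < dim_col (1\<^sub>m N)"
  then have i: "i < N" and j: "j < N"
    by auto
  note L = cmv_L_entry[OF N]
  obtain q where q: "i = 2 * q \<or> i = 2 * q + 1"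
    by (metis odd_two_times_div_two_succ dvd_mult_div_cancel)
  have odd_pred: "odd k" if "2 * q = Suc k" for k
    using that by presburger
  have "(?L * map_mat cnj ?L) $$ (i, j) = (\<Sum>k<N. ?L $$ (i, k) * cnj (?L $$ (k, j)))"
    using i j by (simp add: cmv_L_def scalar_prod_def lessThan_atLeast0)
  also have "\<dots> = ?L $$ (i, 2 * q) * cnj (?L $$ (2 * q, j))
      + (if Suc (2 * q) < N then ?L $$ (i, Suc (2 * q)) * cnj (?L $$ (Suc (2 * q), j)) else 0)"
    using i q odd_pred by (intro sum_lessThan_two_support) (auto simp: L)
  also have "\<dots> = 1\<^sub>m N $$ (i, j)"
  proof (cases "Suc (2 * q) < N")
    case True
    then have "cmod (?c (2 * q)) \<le> 1"
      using norm_c by simp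
    then show ?thesis
      using i j q odd_pred True
      by (cases "j = 2 * q"; cases "j = Suc (2 * q)") (auto simp: L cmv_rho_mult_self mult.commute)
  next
    case False
    then have "i = 2 * q" and "N = Suc (2 * q)"
      using i q by auto
    then have "i = 2 * q" and "?c i * cnj (?c i) = 1"
      using last_c by simp_all
    then show ?thesis
      using i j odd_pred False by (auto simp: L mult.commute)
  qed
  finally show "(?L * map_mat cnj ?L) $$ (i, j) = 1\<^sub>m N $$ (i, j)" .
qed (simp_all add: cmv_L_def)

interpretation const_poly: comm_ring_hom "\<lambda>x :: 'a :: comm_ring_1. [:x:]"
  by unfold_locales auto

lemma pencil_eq_cmv:
  assumes N: "N = length al + 1"
  shows "pencil N (\<lambda>k. (al @ [b]) ! k) =
    [:0, 1:] \<cdot>\<^sub>m map_mat (\<lambda>x. [:x:]) (map_mat cnj (cmv_L N al b)) - map_mat (\<lambda>x. [:x:]) (cmv_M N al b)"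
proof (rule eq_matI)
  fix i j
  assume "i < dim_row ([:0, 1:] \<cdot>\<^sub>m map_mat (\<lambda>x. [:x:]) (map_mat cnj (cmv_L N al b)) - map_mat (\<lambda>x. [:x:]) (cmv_M N al b))"
    and "j < dim_col ([:0, 1:] \<cdot>\<^sub>m map_mat (\<lambda>x. [:x:]) (map_mat cnj (cmv_L N al b)) - map_mat (\<lambda>x. [:x:]) (cmv_M N al b))"
  then have i: "i < N" and j: "j < N"
    using cmv_M_carrier[of N al b] by auto
  show "pencil N (\<lambda>k. (al @ [b]) ! k) $$ (i, j) = ([:0, 1:] \<cdot>\<^sub>m map_mat (\<lambda>x. [:x:]) (map_mat cnj (cmv_L N al b)) - map_mat (\<lambda>x. [:x:]) (cmv_M N al b)) $$ (i, j)"
    using i j cmv_L_carrier[of N al b] cmv_M_carrier[of N al b]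
    by (auto simp: tridiag_def pencil_diag_def pencil_offdiag_def cmv_L_entry[OF N] cmv_M_entry[OF N])
qed (use cmv_M_carrier[of N al b] in \<open>auto simp: tridiag_def\<close>)

text \<open>Since \<open>L\<close> is unitary, \<open>z - LM = L (z L\<^sup>* - M)\<close>; comparing leading coefficients
  removes the scalar factor \<open>det L\<close> and the sign.\<close>

theorem char_poly_CMV:
  assumes al: "\<forall>a\<in>set al. cmod a < 1" and b: "cmod b = 1"
  shows "char_poly (CMV al b) = fst (szego (al @ [b]))"
proof -
  define N where "N = length al + 1"
  define L M where "L = cmv_L N al b" and "M = cmv_M N al b"
  define c where "c = (\<lambda>k. (al @ [b]) ! k)"
  let ?P = "map_mat (\<lambda>x :: complex. [:x:])"
  have L: "L \<in> carrier_mat N N" and M: "M \<in> carrier_mat N N"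
    by (simp_all add: L_def M_def cmv_L_carrier cmv_M_carrier)
  have PL: "?P L \<in> carrier_mat N N" and PL': "?P (map_mat cnj L) \<in> carrier_mat N N"
    and PM: "?P M \<in> carrier_mat N N"
    using L M by simp_all
  have "?P L * pencil N c = ?P L * ([:0, 1:] \<cdot>\<^sub>m ?P (map_mat cnj L) - ?P M)"
    unfolding c_def L_def M_def N_def by (simp add: pencil_eq_cmv)
  also have "\<dots> = ?P L * ([:0, 1:] \<cdot>\<^sub>m ?P (map_mat cnj L)) - ?P L * ?P M"
    using PL' PM by (intro mult_minus_distrib_mat[OF PL]) auto
  also have "?P L * ([:0, 1:] \<cdot>\<^sub>m ?P (map_mat cnj L)) = [:0, 1:] \<cdot>\<^sub>m (?P L * ?P (map_mat cnj L))"
    by (rule mult_smult_distrib[OF PL PL'])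
  also have "?P L * ?P (map_mat cnj L) = 1\<^sub>m N"
  proof -
    have "L * map_mat cnj L = 1\<^sub>m N"
      unfolding L_def by (rule cmv_L_unitary[OF N_def al b])
    moreover have "map_mat cnj L \<in> carrier_mat N N"
      using L by simp
    ultimately show ?thesis
      using const_poly.mat_hom_mult[OF L] const_poly.mat_hom_one by metis
  qed
  also have "?P L * ?P M = ?P (L * M)"
    by (rule const_poly.mat_hom_mult[OF L M, symmetric])
  also have "[:0, 1:] \<cdot>\<^sub>m 1\<^sub>m N - ?P (L * M) = char_poly_matrix (L * M)"
    using L M by (auto simp: char_poly_matrix_def)
  finally have "char_poly_matrix (L * M) = ?P L * pencil N c"
    by simp
  moreover have "CMV al b = L * M"
    by (simp add: CMV_def L_def M_def N_def)
  ultimately have "char_poly (CMV al b) = det (?P L) * det (pencil N c)"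
    unfolding char_poly_def by (simp add: det_mult[OF PL])
  then have "char_poly (CMV al b) = [:det L:] * det (pencil N c)"
    by (simp add: const_poly.hom_det)
  moreover obtain \<kappa> where "det (pencil N c) = Polynomial.smult \<kappa> (fst (szego (al @ [b])))"
  proof -
    have "\<forall>j<N. cmod (c j) \<le> 1" and "cmod (c (N - 1)) = 1"
      using al b by (auto simp: N_def c_def nth_append less_imp_le)
    moreover have "map c [0..<N] = al @ [b]"
      unfolding N_def c_def by (metis length_append_singleton map_nth Suc_eq_plus1)
    ultimately show ?thesis
      using that det_pencil_unimodular_last[of N c] by (auto simp: N_def)
  qed
  ultimately obtain \<kappa>' where cp: "char_poly (CMV al b) = Polynomial.smult \<kappa>' (fst (szego (al @ [b])))"
    by auto
  have "coeff (char_poly (CMV al b)) N = 1"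
    using degree_monic_char_poly[OF CMV_carrier] by (simp add: N_def)
  moreover have "coeff (fst (szego (al @ [b]))) N = 1"
    using szego_degree_coeff[of "al @ [b]"] by (simp add: N_def)
  ultimately show ?thesis
    using cp by simp
qed

section \<open>Simple spectra on the unit circle\<close>

lemma strict_mono_on_atLeastAtMostI:
  fixes x :: "nat \<Rightarrow> 'a::order"
  assumes "\<And>k. m \<le> k \<Longrightarrow> k < n \<Longrightarrow> x k < x (Suc k)"
  shows "strict_mono_on {m..n} x"
proof (rule strict_mono_onI)
  fix i j
  assume "i \<in> {m..n}" and "j \<in> {m..n}" and "i < j"
  then have "Suc i \<le> j" and "m \<le> i" and "j \<le> n"
    by auto
  then show "x i < x j"
    by (induction j rule: dec_induct) (use assms in \<open>auto intro: less_trans\<close>)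
qed

lemma interlacing_strict_mono:
  fixes x1 x2 :: "nat \<Rightarrow> real"
  assumes "\<forall>j\<in>{1..n-1}. x1 j < x2 j" and "\<forall>j\<in>{1..n-2}. x2 j < x1 (j + 1)" and "x2 (n - 1) = x1 n"
  shows "strict_mono_on {1..n} x1" and "strict_mono_on {1..n-1} x2"
proof -
  show "strict_mono_on {1..n} x1"
  proof (rule strict_mono_on_atLeastAtMostI)
    fix k
    assume "1 \<le> k" and "k < n"
    then have "x1 k < x2 k"
      using assms(1) by simp
    also have "x2 k \<le> x1 (Suc k)"
    proof (cases "k = n - 1")
      case True
      then show ?thesis
        using assms(3) \<open>k < n\<close> by simp
    next
      case False
      then show ?thesis
        using assms(2) \<open>1 \<le> k\<close> \<open>k < n\<close> by (simp add: less_imp_le)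
    qed
    finally show "x1 k < x1 (Suc k)" .
  qed
  show "strict_mono_on {1..n-1} x2"
  proof (rule strict_mono_on_atLeastAtMostI)
    fix k
    assume "1 \<le> k" and "k < n - 1"
    then have "x2 k < x1 (Suc k)"
      using assms(2) by simp
    also have "x1 (Suc k) < x2 (Suc k)"
      using assms(1) \<open>k < n - 1\<close> by simp
    finally show "x2 k < x2 (Suc k)" .
  qed
qed

lemma exp_i_neq_within_period:
  assumes "x < y" and "y < x + 2 * pi"
  shows "exp (\<i> * of_real x) \<noteq> exp (\<i> * of_real y)"
proof
  assume "exp (\<i> * of_real x) = exp (\<i> * of_real y)"
  then have "cis x = cis y"
    by (simp add: cis_conv_exp mult.commute)
  then have "cis (y - x) = 1"
    by (simp add: cis_divide[symmetric])
  then have "cos (y - x) = 1"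
    by (metis cis.sel(1) one_complex.sel(1))
  then obtain k :: int where k: "y - x = of_int k * 2 * pi"
    using cos_one_2pi_int by blast
  then have "of_int k * (2 * pi) = y - x"
    by (simp add: mult.assoc)
  then have "0 < of_int k * (2 * pi)" and "of_int k * (2 * pi) < 1 * (2 * pi)"
    using assms by linarith+
  then have "0 < real_of_int k" and "real_of_int k < 1"
    using mult_less_cancel_right_pos[of "2 * pi" "of_int k" 1] by (simp_all add: zero_less_mult_iff)
  then show False
    by simp
qed

lemma card_exp_i_image:
  assumes mono: "strict_mono_on {1..n} x" and window: "x n < x 1 + 2 * pi"
  shows "card ((\<lambda>j. exp (\<i> * of_real (x j))) ` {1..n}) = n"
proof -
  have "inj_on (\<lambda>j. exp (\<i> * of_real (x j))) {1..n}"
  proof (rule linorder_inj_onI')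
    fix i j
    assume "i \<in> {1..n}" and "j \<in> {1..n}" and "i < j"
    then have "x i < x j" and "x 1 \<le> x i" and "x j \<le> x n"
      using mono by (auto simp: strict_mono_on_leD strict_mono_onD)
    then show "exp (\<i> * of_real (x i)) \<noteq> exp (\<i> * of_real (x j))"
      using window by (intro exp_i_neq_within_period) auto
  qed
  then show ?thesis
    by (simp add: card_image)
qed

lemma card_interlaced_points:
  fixes x1 x2 :: "nat \<Rightarrow> real"
  assumes "n \<ge> 2" and ord1: "\<forall>j\<in>{1..n-1}. x1 j < x2 j" and ord2: "\<forall>j\<in>{1..n-2}. x2 j < x1 (j + 1)"
    and ord3: "x2 (n - 1) = x1 n" and ord4: "x1 n < x1 1 + 2 * pi"
  shows "card ((\<lambda>j. exp (\<i> * of_real (x1 j))) ` {1..n}) = n"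
    and "card ((\<lambda>j. exp (\<i> * of_real (x2 j))) ` {1..n-1}) = n - 1"
proof -
  have mono1: "strict_mono_on {1..n} x1" and mono2: "strict_mono_on {1..n-1} x2"
    by (rule interlacing_strict_mono[OF ord1 ord2 ord3])+
  show "card ((\<lambda>j. exp (\<i> * of_real (x1 j))) ` {1..n}) = n"
    by (rule card_exp_i_image[OF mono1 ord4])
  have "x1 1 < x2 1"
    using bspec[OF ord1, of 1] assms(1) by simp
  then have "x2 (n - 1) < x2 1 + 2 * pi"
    using ord3 ord4 by simp
  then show "card ((\<lambda>j. exp (\<i> * of_real (x2 j))) ` {1..n-1}) = n - 1"
    by (rule card_exp_i_image[OF mono2])
qed

lemma char_poly_simple_spectrum:
  fixes A :: "complex mat"
  assumes A: "A \<in> carrier_mat n n" and card: "card {k. eigenvalue A k} = n"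
  shows "char_poly A = (\<Prod>a\<in>{k. eigenvalue A k}. [:- a, 1:])"
proof -
  obtain as where as: "char_poly A = (\<Prod>a\<leftarrow>as. [:- a, 1:])" and len: "length as = n"
    using char_poly_factorized[OF A] by blast
  have "set as = {k. eigenvalue A k}"
    using eigenvalue_root_char_poly[OF A] by (auto simp: as poly_prod_list prod_list_zero_iff)
  then have "distinct as"
    using card len by (simp add: card_distinct)
  then show ?thesis
    using as \<open>set as = {k. eigenvalue A k}\<close> prod.distinct_set_conv_list[of as "\<lambda>a. [:- a, 1:]"]
    by simp
qed

lemma szego_eq_if_isospectral_CMV:
  assumes "length al = length bl"
    and "\<forall>x\<in>set al. cmod x < 1" and "\<forall>x\<in>set bl. cmod x < 1" and "cmod b = 1" and "cmod c = 1"
    and spec: "{k. eigenvalue (CMV al b) k} = {k. eigenvalue (CMV bl c) k}"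
    and simple: "card {k. eigenvalue (CMV al b) k} = length al + 1"
  shows "fst (szego (al @ [b])) = fst (szego (bl @ [c]))"
proof -
  have "char_poly (CMV al b) = char_poly (CMV bl c)"
    using char_poly_simple_spectrum[OF CMV_carrier simple]
      char_poly_simple_spectrum[OF CMV_carrier, of bl c] spec simple assms(1) by simp
  then show ?thesis
    using assms by (simp add: char_poly_CMV)
qed

theorem theorem7:
  fixes n :: nat and x1 x2 :: "nat \<Rightarrow> real"
    and a1 a2 :: "complex list" and b11 b21 b12 b22 :: complex
  assumes n2: "n \<ge> 2"
    and ord1: "\<forall>j\<in>{1..n-1}. x1 j < x2 j"
    and ord2: "\<forall>j\<in>{1..n-2}. x2 j < x1 (j + 1)"
    and ord3: "x2 (n - 1) = x1 n"
    and ord4: "x1 n < x1 1 + 2 * pi"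
    and len1: "length a1 = n - 1" and len2: "length a2 = n - 1"
    and a1_in: "\<forall>a\<in>set a1. cmod a < 1" and a2_in: "\<forall>a\<in>set a2. cmod a < 1"
    and b_unit: "cmod b11 = 1" "cmod b21 = 1" "cmod b12 = 1" "cmod b22 = 1"
    and spec11: "{k. eigenvalue (CMV a1 b11) k} = (\<lambda>j. exp (\<i> * of_real (x1 j))) ` {1..n}"
    and spec21: "{k. eigenvalue (CMV (take (n - 2) a1) b21) k} = (\<lambda>j. exp (\<i> * of_real (x2 j))) ` {1..n-1}"
    and spec12: "{k. eigenvalue (CMV a2 b12) k} = (\<lambda>j. exp (\<i> * of_real (x1 j))) ` {1..n}"
    and spec22: "{k. eigenvalue (CMV (take (n - 2) a2) b22) k} = (\<lambda>j. exp (\<i> * of_real (x2 j))) ` {1..n-1}"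
    and last_eq: "a1 ! (n - 2) = a2 ! (n - 2)"
  shows "CMV a1 b11 = CMV a2 b12 \<and> CMV (take (n - 2) a1) b21 = CMV (take (n - 2) a2) b22"
proof -
  have "a1 = take (n - 2) a1 @ [a1 ! (n - 2)]" and "a2 = take (n - 2) a2 @ [a2 ! (n - 2)]"
    using id_take_nth_drop[of "n - 2" a1] id_take_nth_drop[of "n - 2" a2] len1 len2 n2 by simp_all
  then obtain ys1 ys2 a where a1: "a1 = ys1 @ [a]" and a2: "a2 = ys2 @ [a]"
    and take: "take (n - 2) a1 = ys1" "take (n - 2) a2 = ys2"
    using last_eq by metis
  have "card {k. eigenvalue (CMV a1 b11) k} = length a1 + 1"
    and "card {k. eigenvalue (CMV ys1 b21) k} = length ys1 + 1"
    using card_interlaced_points[OF n2 ord1 ord2 ord3 ord4] spec11 spec21 len1 n2 a1 take by simp_all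
  then have level1: "fst (szego (ys1 @ [a, b11])) = fst (szego (ys2 @ [a, b12]))"
    and level2: "fst (szego (ys1 @ [b21])) = fst (szego (ys2 @ [b22]))"
    using szego_eq_if_isospectral_CMV[of a1 a2 b11 b12] szego_eq_if_isospectral_CMV[of ys1 ys2 b21 b22]
      a1_in a2_in b_unit spec11 spec12 spec21 spec22 len1 len2
    unfolding take by (simp_all add: a1 a2)
  have "length ys1 = length ys2" and "\<forall>x\<in>set ys1. cmod x < 1" and "cmod a < 1" and "b11 \<noteq> 0"
    using a1 a2 len1 len2 a1_in b_unit(1) by auto
  then have "ys1 = ys2 \<and> b11 = b12 \<and> b21 = b22"
    using szego_two_levels_unique level1 level2 b_unit(2) by blast
  then show ?thesis
    using a1 a2 take by simp
qed

end
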